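(* For all $u_1, \ldots, u_n \in \mathcal{L}_s$, there exists a unique subset $\{v_1, \ldots, v_m\} \subseteq \{u_1, \ldots, u_n\}$ such that $\max(u_1, \ldots, u_n) =_{\mathcal{L}} \max(v_1, \ldots, v_m)$ and $\max(v_1, \ldots, v_m) \in \mathcal{L}_r$.
   Context: $\mathcal{X}$ is a countable set of variables; a valuation is $\sigma\colon\mathcal{X}\to\mathbb{N}$. For finite $E\subseteq\mathcal{X}$, $x\in\mathcal{X}$, $S\in\mathbb{N}$, the sublevels $A(E,x,S)$ and $B(E,S)$ have values $[A(E,x,S)]_\sigma = 0$ if some $y\in E$ has $\sigma(y)=0$, and $\sigma(x)+S$ otherwise; $[B(E,S)]_\sigma=0$ if some $y\in E$ has $\sigma(y)=0$, and $S$ otherwise. $\mathcal{L}_s$ is the set of sublevels $A(E,x,S)$ with $x\in E$ and $B(E,S)$ with $S>0$. $t_1\leqslant_{\mathcal{L}} t_2$ (resp. $t_1 =_{\mathcal{L}} t_2$) means $[t_1]_\sigma\le[t_2]_\sigma$ (resp. $=$) for every valuation $\sigma$; $\max$ of a finite family is evaluated pointwise (empty max has value $0$). Two sublevels $u,v$ are incomparable if neither $u\leqslant_{\mathcal{L}} v$ nor $v\leqslant_{\mathcal{L}} u$. A minimal representation is a formal expression $\max(v_1,\ldots,v_m)$ where $\{v_1,\ldots,v_m\}$ is a finite set of pairwise incomparable elements of $\mathcal{L}_s$; $\mathcal{L}_r$ is the set of minimal representations. *)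

theory Defs
  imports "HOL-Library.Countable"
begin

text \<open>Sublevels over a (countable) type of variables 'x.
  A E x S and B E S; finiteness of E is imposed in the membership predicate Ls.\<close>
datatype 'x sublevel = A "'x set" 'x nat | B "'x set" nat

type_synonym 'x valuation = "'x \<Rightarrow> nat"

fun sval :: "'x valuation \<Rightarrow> 'x sublevel \<Rightarrow> nat" where
  "sval \<sigma> (A E x S) = (if \<exists>y\<in>E. \<sigma> y = 0 then 0 else \<sigma> x + S)"
| "sval \<sigma> (B E S) = (if \<exists>y\<in>E. \<sigma> y = 0 then 0 else S)"

definition leL :: "'x sublevel \<Rightarrow> 'x sublevel \<Rightarrow> bool" where
  "leL t1 t2 \<longleftrightarrow> (\<forall>\<sigma>. sval \<sigma> t1 \<le> sval \<sigma> t2)"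

definition incomparable :: "'x sublevel \<Rightarrow> 'x sublevel \<Rightarrow> bool" where
  "incomparable u v \<longleftrightarrow> \<not> leL u v \<and> \<not> leL v u"

definition Ls :: "'x sublevel set" where
  "Ls = {A E x S | E x S. finite E \<and> x \<in> E} \<union> {B E S | E S. finite E \<and> S > 0}"

definition maxval :: "'x valuation \<Rightarrow> 'x sublevel set \<Rightarrow> nat" where
  "maxval \<sigma> V = Max (insert 0 (sval \<sigma> ` V))"

definition eqL_max :: "'x sublevel set \<Rightarrow> 'x sublevel set \<Rightarrow> bool" where
  "eqL_max U V \<longleftrightarrow> (\<forall>\<sigma>. maxval \<sigma> U = maxval \<sigma> V)"

text \<open>Minimal representations, identified with their (finite) sets of arguments.\<close>
definition Lr :: "'x sublevel set set" where
  "Lr = {V. finite V \<and> V \<subseteq> Ls \<and> (\<forall>u\<in>V. \<forall>v\<in>V. u \<noteq> v \<longrightarrow> incomparable u v)}"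

end

theory Submission
  imports Defs
begin

(* Every sublevel u in Ls is join-prime: if u <= max V pointwise for a finite V \<subseteq> Ls, then
   u <= v for a single v in V. One valuation suffices as witness: it is 1 on the guard set E of u
   and 0 outside, except that for u = A E x S it takes at x a value N above every offset in V.
   At this valuation only sublevels guarded inside E (and, for u = A E x S, only those built on x)
   can reach the value of u, and each of those dominates u everywhere. As the order is moreover
   antisymmetric on Ls, any V \<subseteq> U with max V = max U dominates U, hence contains the maximal
   elements of U, and pairwise incomparability leaves no room for anything else. *)

lemma maxval_le_iff: "finite V \<Longrightarrow> maxval \<sigma> V \<le> k \<longleftrightarrow> (\<forall>v\<in>V. sval \<sigma> v \<le> k)"
  unfolding maxval_def by (simp add: Max_le_iff)

lemma sval_le_maxval: "finite V \<Longrightarrow> v \<in> V \<Longrightarrow> sval \<sigma> v \<le> maxval \<sigma> V"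
  using maxval_le_iff by blast

lemma maxval_attained:
  assumes "finite V" "0 < k" "k \<le> maxval \<sigma> V"
  shows "\<exists>v\<in>V. k \<le> sval \<sigma> v"
proof -
  have "maxval \<sigma> V \<in> insert 0 (sval \<sigma> ` V)"
    unfolding maxval_def using assms(1) by (intro Max_in) auto
  with assms show ?thesis by auto
qed

lemma maxval_le_if_dominated:
  assumes "finite U" "finite V" "\<forall>u\<in>U. \<exists>v\<in>V. leL u v"
  shows "maxval \<sigma> U \<le> maxval \<sigma> V"
  unfolding maxval_le_iff[OF assms(1)]
proof
  fix u assume "u \<in> U"
  then obtain v where "v \<in> V" "leL u v" using assms(3) by blast
  then show "sval \<sigma> u \<le> maxval \<sigma> V"
    using sval_le_maxval[OF assms(2)] unfolding leL_def by (meson le_trans)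
qed

lemma eqL_max_if_dominated:
  assumes "finite U" "V \<subseteq> U" "\<forall>u\<in>U. \<exists>v\<in>V. leL u v"
  shows "eqL_max U V"
proof -
  have "finite V" using assms(1,2) by (rule finite_subset[rotated])
  moreover have "\<forall>v\<in>V. \<exists>u\<in>U. leL v u" using assms(2) by (auto simp: leL_def)
  ultimately show ?thesis
    unfolding eqL_max_def using assms maxval_le_if_dominated by (blast intro: order_antisym)
qed

lemma leL_refl: "leL u u"
  by (simp add: leL_def)

lemma leL_trans: "leL u v \<Longrightarrow> leL v w \<Longrightarrow> leL u w"
  unfolding leL_def by (meson le_trans)

fun guard :: "'x sublevel \<Rightarrow> 'x set" where
  "guard (A E _ _) = E"
| "guard (B E _) = E"

fun offset :: "'x sublevel \<Rightarrow> nat" where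
  "offset (A _ _ S) = S"
| "offset (B _ S) = S"

lemma sval_eq_0_iff: "v \<in> Ls \<Longrightarrow> sval \<sigma> v = 0 \<longleftrightarrow> (\<exists>y\<in>guard v. \<sigma> y = 0)"
  unfolding Ls_def by (auto split: if_splits; force)

lemma sval_pos_imp_guard_pos: "0 < sval \<sigma> v \<Longrightarrow> y \<in> guard v \<Longrightarrow> 0 < \<sigma> y"
  by (cases v) (auto split: if_splits)

lemma leL_if_guard_pos:
  assumes "\<And>\<sigma>. \<forall>y\<in>guard u. 0 < \<sigma> y \<Longrightarrow> sval \<sigma> u \<le> sval \<sigma> v"
  shows "leL u v"
  unfolding leL_def
proof
  fix \<sigma>
  show "sval \<sigma> u \<le> sval \<sigma> v"
  proof (cases "\<exists>y\<in>guard u. \<sigma> y = 0")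
    case True
    then show ?thesis by (cases u) auto
  next
    case False
    then have "\<forall>y\<in>guard u. 0 < \<sigma> y" by auto
    then show ?thesis by (rule assms)
  qed
qed

lemma leL_imp_guard_subset:
  assumes "u \<in> Ls" "v \<in> Ls" "leL u v"
  shows "guard v \<subseteq> guard u"
proof
  fix z assume "z \<in> guard v"
  let ?\<sigma> = "\<lambda>y. if y = z then 0 else 1::nat"
  have "sval ?\<sigma> v = 0" using sval_eq_0_iff[OF assms(2)] \<open>z \<in> guard v\<close> by auto
  then have "sval ?\<sigma> u = 0" using assms(3) unfolding leL_def by (metis le_zero_eq)
  then show "z \<in> guard u" using sval_eq_0_iff[OF assms(1)] by (auto split: if_splits)
qed

lemma leL_antisym:
  assumes u: "u \<in> Ls" and v: "v \<in> Ls" and uv: "leL u v" and vu: "leL v u"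
  shows "u = v"
proof -
  have eq: "sval \<sigma> u = sval \<sigma> v" for \<sigma>
    using uv vu unfolding leL_def by (meson le_antisym)
  have guard_eq: "guard u = guard v"
    using leL_imp_guard_subset[OF u v uv] leL_imp_guard_subset[OF v u vu] by (rule equalityI[rotated])
  have same_kind: "(\<exists>E x S. u = A E x S) \<longleftrightarrow> (\<exists>E x S. v = A E x S)"
    using eq[of "\<lambda>_. 1"] eq[of "\<lambda>_. 2"] by (cases u; cases v) auto
  show ?thesis
  proof (cases u)
    case uA: (A E x S)
    with same_kind guard_eq obtain x' S' where vA: "v = A E x' S'"
      by (cases v) auto
    have "x = x'"
    proof (rule ccontr)
      assume "x \<noteq> x'"
      then show False
        using uA vA eq[of "\<lambda>y. if y = x then S' + 2 else 1"] by (auto split: if_splits)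
    qed
    moreover have "S = S'"
      using uA vA eq[of "\<lambda>_. 1"] by simp
    ultimately show ?thesis
      using uA vA by simp
  next
    case uB: (B E S)
    with same_kind guard_eq obtain S' where vB: "v = B E S'"
      by (cases v) auto
    then show ?thesis
      using uB eq[of "\<lambda>_. 1"] by simp
  qed
qed

definition peak_valuation :: "'x set \<Rightarrow> 'x \<Rightarrow> nat \<Rightarrow> 'x valuation" where
  "peak_valuation E x N y = (if y \<in> E then if y = x then N else 1 else 0)"

lemma B_leL_if_indicator_test:
  fixes E :: "'x set"
  assumes "0 < S" "v \<in> Ls" and test: "S \<le> sval (\<lambda>y. of_bool (y \<in> E)) v"
  shows "leL (B E S) v"
proof (rule leL_if_guard_pos)
  fix \<sigma> :: "'x valuation" assume pos: "\<forall>y\<in>guard (B E S). 0 < \<sigma> y"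
  have "guard v \<subseteq> E"
    using sval_pos_imp_guard_pos[of "\<lambda>y. of_bool (y \<in> E)" v] assms(1) test by fastforce
  then have test_pos: "\<forall>y\<in>guard v. 0 < (of_bool (y \<in> E) :: nat)" and pos_v: "\<forall>y\<in>guard v. 0 < \<sigma> y"
    using pos by auto
  show "sval \<sigma> (B E S) \<le> sval \<sigma> v"
  proof (cases v)
    case (A E' x' S')
    with \<open>v \<in> Ls\<close> \<open>guard v \<subseteq> E\<close> have "x' \<in> E'" "x' \<in> E" unfolding Ls_def by auto
    then have "S \<le> 1 + S'" "1 \<le> \<sigma> x'"
      using A test test_pos pos_v by (auto simp: Suc_le_eq)
    then show ?thesis using A pos pos_v by auto
  next
    case (B E' S')
    then show ?thesis using pos pos_v test test_pos by force
  qed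
qed

lemma A_leL_if_peak_test:
  fixes x :: 'x
  assumes "x \<in> E" "v \<in> Ls" and large: "offset v + 2 \<le> N"
    and test: "N + S \<le> sval (peak_valuation E x N) v"
  shows "leL (A E x S) v"
proof -
  let ?\<tau> = "peak_valuation E x N"
  have "guard v \<subseteq> E"
    using sval_pos_imp_guard_pos[of ?\<tau> v] large test
    by (force simp: peak_valuation_def split: if_splits)
  have test_pos: "\<forall>y\<in>guard v. 0 < ?\<tau> y"
    using \<open>guard v \<subseteq> E\<close> large by (auto simp: peak_valuation_def)
  obtain E' S' where v: "v = A E' x S'" and "S \<le> S'"
  proof (cases v)
    case (A E' x' S')
    with \<open>v \<in> Ls\<close> \<open>guard v \<subseteq> E\<close> have "x' \<in> E'" "x' \<in> E" unfolding Ls_def by auto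
    then have peak_value: "sval ?\<tau> v = ?\<tau> x' + S'"
      using A test_pos by auto
    have "x' = x"
    proof (rule ccontr)
      assume "x' \<noteq> x"
      then show False
        using peak_value test large A \<open>x' \<in> E\<close> by (simp add: peak_valuation_def)
    qed
    then show ?thesis
      using that A peak_value test \<open>x \<in> E\<close> by (simp add: peak_valuation_def)
  next
    case (B E' S')
    then show ?thesis
      using test large by (simp split: if_splits)
  qed
  show ?thesis
  proof (rule leL_if_guard_pos)
    fix \<sigma> :: "'x valuation" assume "\<forall>y\<in>guard (A E x S). 0 < \<sigma> y"
    with \<open>guard v \<subseteq> E\<close> \<open>S \<le> S'\<close> show "sval \<sigma> (A E x S) \<le> sval \<sigma> v"
      unfolding v by force
  qed
qed

lemma Ls_join_prime:
  assumes "u \<in> Ls" "finite V" "V \<subseteq> Ls" and le: "\<And>\<sigma>. sval \<sigma> u \<le> maxval \<sigma> V"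
  shows "\<exists>v\<in>V. leL u v"
proof (cases u)
  case (A E x S)
  then have "x \<in> E" using \<open>u \<in> Ls\<close> unfolding Ls_def by auto
  define N where "N = Max (insert 0 (offset ` V)) + 2"
  let ?\<tau> = "peak_valuation E x N"
  have large: "offset v + 2 \<le> N" if "v \<in> V" for v
    unfolding N_def using \<open>finite V\<close> that by simp
  have "sval ?\<tau> u = N + S"
    using A \<open>x \<in> E\<close> by (auto simp: peak_valuation_def N_def)
  with le[of ?\<tau>] have bound: "N + S \<le> maxval ?\<tau> V" by simp
  have "0 < N + S" by (simp add: N_def)
  then obtain v where v: "v \<in> V" and test: "N + S \<le> sval ?\<tau> v"
    using maxval_attained[OF \<open>finite V\<close> _ bound] by blast
  from v \<open>V \<subseteq> Ls\<close> have "v \<in> Ls" by blast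
  from A_leL_if_peak_test[OF \<open>x \<in> E\<close> this large[OF v] test] v show ?thesis
    unfolding A by blast
next
  case (B E S)
  then have "0 < S" using \<open>u \<in> Ls\<close> unfolding Ls_def by auto
  let ?\<iota> = "\<lambda>y. of_bool (y \<in> E) :: nat"
  have "sval ?\<iota> u = S"
    using B by auto
  with le[of ?\<iota>] have "S \<le> maxval ?\<iota> V" by simp
  then obtain v where v: "v \<in> V" and test: "S \<le> sval ?\<iota> v"
    using maxval_attained[OF \<open>finite V\<close> \<open>0 < S\<close>] by blast
  from v \<open>V \<subseteq> Ls\<close> have "v \<in> Ls" by blast
  from B_leL_if_indicator_test[OF \<open>0 < S\<close> this test] v show ?thesis
    unfolding B by blast
qed

definition maximals :: "'x sublevel set \<Rightarrow> 'x sublevel set" where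
  "maximals U = {u \<in> U. \<forall>w\<in>U. leL u w \<longrightarrow> w = u}"

lemma exists_maximal_above:
  assumes "finite U" "U \<subseteq> Ls" "u \<in> U"
  shows "\<exists>m\<in>maximals U. leL u m"
proof -
  let ?R = "\<lambda>a b. leL a b \<and> \<not> leL b a"
  have "asymp_on U ?R" "transp_on U ?R"
    by (auto intro: asymp_onI transp_onI dest: leL_trans)
  then obtain m where m: "m \<in> U" "leL u m" and top: "\<forall>w\<in>U. ?R m w \<longrightarrow> \<not> leL u w"
    using Finite_Set.bex_max_element_with_property[of U ?R "leL u"] assms leL_refl by blast
  have "w = m" if "w \<in> U" "leL m w" for w
    using top that m leL_trans leL_antisym assms(2) by blast
  then show ?thesis
    using m unfolding maximals_def by blast
qed

lemma maximals_subset: "maximals U \<subseteq> U"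
  by (auto simp: maximals_def)

lemma maximals_in_Lr: "finite U \<Longrightarrow> U \<subseteq> Ls \<Longrightarrow> maximals U \<in> Lr"
  unfolding Lr_def incomparable_def maximals_def by auto

lemma eqL_max_maximals:
  assumes "finite U" "U \<subseteq> Ls"
  shows "eqL_max U (maximals U)"
proof (rule eqL_max_if_dominated[OF assms(1) maximals_subset])
  show "\<forall>u\<in>U. \<exists>m\<in>maximals U. leL u m" using exists_maximal_above assms by blast
qed

lemma Lr_representative_eq_maximals:
  assumes "finite U" "U \<subseteq> Ls" "V \<subseteq> U" "eqL_max U V" "V \<in> Lr"
  shows "V = maximals U"
proof -
  have "finite V" "V \<subseteq> Ls" and incomp: "\<forall>v\<in>V. \<forall>v'\<in>V. v \<noteq> v' \<longrightarrow> incomparable v v'"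
    using \<open>V \<in> Lr\<close> unfolding Lr_def by auto
  have dominated: "\<exists>v\<in>V. leL u v" if "u \<in> U" for u
  proof (rule Ls_join_prime)
    show "u \<in> Ls" "finite V" "V \<subseteq> Ls" using that assms \<open>finite V\<close> \<open>V \<subseteq> Ls\<close> by auto
    show "sval \<sigma> u \<le> maxval \<sigma> V" for \<sigma>
      using sval_le_maxval[OF \<open>finite U\<close> that] \<open>eqL_max U V\<close> unfolding eqL_max_def by simp
  qed
  have "v \<in> maximals U" if "v \<in> V" for v
  proof -
    have "w = v" if "w \<in> U" "leL v w" for w
    proof -
      obtain v' where "v' \<in> V" "leL w v'" using dominated \<open>w \<in> U\<close> by blast
      with \<open>v \<in> V\<close> \<open>leL v w\<close> incomp have "v' = v"
        unfolding incomparable_def by (meson leL_trans)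
      with \<open>leL w v'\<close> \<open>leL v w\<close> show "w = v"
        using leL_antisym \<open>w \<in> U\<close> \<open>v \<in> V\<close> assms(2,3) by blast
    qed
    then show ?thesis using \<open>v \<in> V\<close> assms(3) unfolding maximals_def by blast
  qed
  moreover have "m \<in> V" if m: "m \<in> maximals U" for m
  proof -
    obtain v where "v \<in> V" "leL m v" using dominated m unfolding maximals_def by blast
    then show ?thesis using m assms(3) unfolding maximals_def by blast
  qed
  ultimately show ?thesis by blast
qed

theorem proposition34:
  fixes us :: "('x::countable) sublevel list"
  assumes "set us \<subseteq> Ls"
  shows "\<exists>!V. V \<subseteq> set us \<and> eqL_max (set us) V \<and> V \<in> Lr"
proof (rule ex1I)
  show "maximals (set us) \<subseteq> set us \<and> eqL_max (set us) (maximals (set us)) \<and> maximals (set us) \<in> Lr"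
    using assms maximals_subset eqL_max_maximals maximals_in_Lr by blast
  show "V = maximals (set us)" if "V \<subseteq> set us \<and> eqL_max (set us) V \<and> V \<in> Lr" for V
    using that assms Lr_representative_eq_maximals by blast
qed

end
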